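(* Let $(\mathfrak g,[\cdot,\cdot]_{\mathfrak g},E)$ be an ENL algebra and let $r\in\mathfrak g\otimes\mathfrak g$ be an EN $r$-matrix, i.e. $[\![r,r]\!]=0$ and $(\mathrm{Id}\otimes E-E\otimes\mathrm{Id})(r)=0$. Assume moreover that $(\mathrm{ad}_x\otimes\mathrm{Id}+\mathrm{Id}\otimes\mathrm{ad}_x)(r+r^{21})=0$ for all $x\in\mathfrak g$. Then the cobracket $\Delta_r(x)=(\mathrm{ad}_x\otimes\mathrm{Id}+\mathrm{Id}\otimes\mathrm{ad}_x)(r)$ endows $\mathfrak g$ with a coboundary ENL bialgebra structure: $(\mathfrak g,\Delta_r)$ is a Lie bialgebra and $\Delta_r\circ E=(E\otimes\mathrm{Id})\circ\Delta_r$ (equivalently, $E^*$ is an equivariant Nijenhuis operator on the Lie algebra $\mathfrak g^*$ whose bracket is dual to $\Delta_r$).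
   Context: All vector spaces are finite-dimensional over an algebraically closed field of characteristic zero. An ENL algebra is a Lie algebra with linear $E$ such that $E[x,y]=[x,Ey]$ for all $x,y$. For $r=\sum_i a_i\otimes b_i\in\mathfrak g\otimes\mathfrak g$, $r^{21}=\sum_i b_i\otimes a_i$, and $[\![r,r]\!]=[r_{12},r_{13}]+[r_{13},r_{23}]+[r_{12},r_{23}]$ computed in $U(\mathfrak g)^{\otimes3}$ with $r_{12}=\sum a_i\otimes b_i\otimes1$, $r_{13}=\sum a_i\otimes1\otimes b_i$, $r_{23}=\sum1\otimes a_i\otimes b_i$. A Lie bialgebra $(\mathfrak g,\Delta)$ is a Lie algebra with a coantisymmetric map $\Delta:\mathfrak g\to\mathfrak g\otimes\mathfrak g$ satisfying the co-Jacobi identity (so that the dual bracket $\langle[\alpha,\beta]_{\mathfrak g^*},x\rangle=\langle\alpha\otimes\beta,\Delta(x)\rangle$ is a Lie bracket on $\mathfrak g^*$) and the 1-cocycle condition $\Delta([x,y])=(\mathrm{ad}_x\otimes\mathrm{Id}+\mathrm{Id}\otimes\mathrm{ad}_x)\Delta(y)-(\mathrm{ad}_y\otimes\mathrm{Id}+\mathrm{Id}\otimes\mathrm{ad}_y)\Delta(x)$. An ENL bialgebra $(\mathfrak g,\Delta,E)$ is a Lie bialgebra such that $(\mathfrak g,E)$ and $(\mathfrak g^*,E^* )$ are ENL algebras; it is coboundary if $\Delta=\Delta_r$ for some $r\in\mathfrak g\otimes\mathfrak g$. *)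

theory Defs
  imports "HOL-Computational_Algebra.Polynomial"
begin

text \<open>Coordinates: g is identified with 'n => 'k via a fixed basis indexed by the
finite type 'n; g (x) g with 'n => 'n => 'k, g (x) g (x) g with 'n => 'n => 'n => 'k.
The dual space g* is identified with 'n => 'k via the pairing sum_i alpha_i x_i.\<close>

type_synonym ('n, 'k) vec = "'n \<Rightarrow> 'k"
type_synonym ('n, 'k) ten2 = "'n \<Rightarrow> 'n \<Rightarrow> 'k"
type_synonym ('n, 'k) ten3 = "'n \<Rightarrow> 'n \<Rightarrow> 'n \<Rightarrow> 'k"

definition alg_closed :: "'k::field itself \<Rightarrow> bool" where
  "alg_closed _ \<longleftrightarrow> (\<forall>p :: 'k poly. degree p \<ge> 1 \<longrightarrow> (\<exists>z. poly p z = 0))"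

definition vadd :: "('n, 'k::field) vec \<Rightarrow> ('n, 'k) vec \<Rightarrow> ('n, 'k) vec" where
  "vadd x y = (\<lambda>i. x i + y i)"

definition smul :: "'k::field \<Rightarrow> ('n, 'k) vec \<Rightarrow> ('n, 'k) vec" where
  "smul a x = (\<lambda>i. a * x i)"

definition unitv :: "'n \<Rightarrow> ('n, 'k::field) vec" where
  "unitv j = (\<lambda>i. if i = j then 1 else 0)"

definition lin :: "(('n, 'k::field) vec \<Rightarrow> ('m, 'k) vec) \<Rightarrow> bool" where
  "lin f \<longleftrightarrow> (\<forall>x y. f (vadd x y) = vadd (f x) (f y)) \<and> (\<forall>a x. f (smul a x) = smul a (f x))"

definition lin2 :: "(('n, 'k::field) vec \<Rightarrow> ('n, 'k) vec \<Rightarrow> ('n, 'k) vec) \<Rightarrow> bool" where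
  "lin2 B \<longleftrightarrow> (\<forall>x. lin (B x)) \<and> (\<forall>y. lin (\<lambda>x. B x y))"

definition is_lie :: "(('n::finite, 'k::field) vec \<Rightarrow> ('n, 'k) vec \<Rightarrow> ('n, 'k) vec) \<Rightarrow> bool" where
  "is_lie B \<longleftrightarrow> lin2 B \<and> (\<forall>x. B x x = (\<lambda>_. 0)) \<and>
     (\<forall>x y z. vadd (B x (B y z)) (vadd (B y (B z x)) (B z (B x y))) = (\<lambda>_. 0))"

definition is_enl :: "(('n::finite, 'k::field) vec \<Rightarrow> ('n, 'k) vec \<Rightarrow> ('n, 'k) vec)
    \<Rightarrow> (('n, 'k) vec \<Rightarrow> ('n, 'k) vec) \<Rightarrow> bool" where
  "is_enl B E \<longleftrightarrow> is_lie B \<and> lin E \<and> (\<forall>x y. E (B x y) = B x (E y))"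

text \<open>(A \<otimes> C)(t) for linear maps A, C on g.\<close>
definition tmap :: "(('n::finite, 'k::field) vec \<Rightarrow> ('n, 'k) vec) \<Rightarrow> (('n, 'k) vec \<Rightarrow> ('n, 'k) vec)
    \<Rightarrow> ('n, 'k) ten2 \<Rightarrow> ('n, 'k) ten2" where
  "tmap A C t = (\<lambda>i j. \<Sum>a\<in>UNIV. \<Sum>b\<in>UNIV. t a b * A (unitv a) i * C (unitv b) j)"

definition flip :: "('n, 'k) ten2 \<Rightarrow> ('n, 'k) ten2" where
  "flip r = (\<lambda>i j. r j i)"

definition tadd :: "('n, 'k::field) ten2 \<Rightarrow> ('n, 'k) ten2 \<Rightarrow> ('n, 'k) ten2" where
  "tadd s t = (\<lambda>i j. s i j + t i j)"

definition tsub :: "('n, 'k::field) ten2 \<Rightarrow> ('n, 'k) ten2 \<Rightarrow> ('n, 'k) ten2" where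
  "tsub s t = (\<lambda>i j. s i j - t i j)"

definition adact :: "(('n::finite, 'k::field) vec \<Rightarrow> ('n, 'k) vec \<Rightarrow> ('n, 'k) vec)
    \<Rightarrow> ('n, 'k) vec \<Rightarrow> ('n, 'k) ten2 \<Rightarrow> ('n, 'k) ten2" where
  "adact B x t = tadd (tmap (B x) id t) (tmap id (B x) t)"

definition cobr :: "(('n::finite, 'k::field) vec \<Rightarrow> ('n, 'k) vec \<Rightarrow> ('n, 'k) vec)
    \<Rightarrow> ('n, 'k) ten2 \<Rightarrow> ('n, 'k) vec \<Rightarrow> ('n, 'k) ten2" where
  "cobr B r x = adact B x r"

text \<open>Classical Yang-Baxter expression [[r,r]] = [r12,r13]+[r13,r23]+[r12,r23], which
for r = sum a_i (x) b_i equals sum [a_i,a_j](x)b_i(x)b_j + a_i(x)a_j(x)[b_i,b_j]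
+ a_i(x)[b_i,a_j](x)b_j in g(x)g(x)g (the commutators in U(g)^3 land there).
Written in coordinates with r = sum r_ab e_a (x) e_b.\<close>
definition cybe :: "(('n::finite, 'k::field) vec \<Rightarrow> ('n, 'k) vec \<Rightarrow> ('n, 'k) vec)
    \<Rightarrow> ('n, 'k) ten2 \<Rightarrow> ('n, 'k) ten3" where
  "cybe B r = (\<lambda>p q s.
      (\<Sum>a\<in>UNIV. \<Sum>a'\<in>UNIV. r a q * r a' s * B (unitv a) (unitv a') p)
    + (\<Sum>b\<in>UNIV. \<Sum>b'\<in>UNIV. r p b * r q b' * B (unitv b) (unitv b') s)
    + (\<Sum>b\<in>UNIV. \<Sum>a'\<in>UNIV. r p b * r a' s * B (unitv b) (unitv a') q))"

text \<open>Dual bracket on g*: <[alpha,beta], x> = <alpha (x) beta, Delta x>.\<close>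
definition dual_br :: "(('n::finite, 'k::field) vec \<Rightarrow> ('n, 'k) ten2)
    \<Rightarrow> ('n, 'k) vec \<Rightarrow> ('n, 'k) vec \<Rightarrow> ('n, 'k) vec" where
  "dual_br D \<alpha> \<beta> = (\<lambda>k. \<Sum>i\<in>UNIV. \<Sum>j\<in>UNIV. \<alpha> i * \<beta> j * D (unitv k) i j)"

definition dual_map :: "(('n::finite, 'k::field) vec \<Rightarrow> ('n, 'k) vec) \<Rightarrow> ('n, 'k) vec \<Rightarrow> ('n, 'k) vec" where
  "dual_map E \<alpha> = (\<lambda>k. \<Sum>i\<in>UNIV. \<alpha> i * E (unitv k) i)"

definition lin_ten :: "(('n::finite, 'k::field) vec \<Rightarrow> ('n, 'k) ten2) \<Rightarrow> bool" where
  "lin_ten D \<longleftrightarrow> (\<forall>x y. D (vadd x y) = tadd (D x) (D y)) \<and>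
                 (\<forall>a x. D (smul a x) = (\<lambda>i j. a * D x i j))"

definition lie_bialgebra :: "(('n::finite, 'k::field) vec \<Rightarrow> ('n, 'k) vec \<Rightarrow> ('n, 'k) vec)
    \<Rightarrow> (('n, 'k) vec \<Rightarrow> ('n, 'k) ten2) \<Rightarrow> bool" where
  "lie_bialgebra B D \<longleftrightarrow> is_lie B \<and> lin_ten D \<and>
     (\<forall>x. flip (D x) = (\<lambda>i j. - D x i j)) \<and>
     is_lie (dual_br D) \<and>
     (\<forall>x y. D (B x y) = tsub (adact B x (D y)) (adact B y (D x)))"

definition enl_bialgebra :: "(('n::finite, 'k::field) vec \<Rightarrow> ('n, 'k) vec \<Rightarrow> ('n, 'k) vec)
    \<Rightarrow> (('n, 'k) vec \<Rightarrow> ('n, 'k) ten2) \<Rightarrow> (('n, 'k) vec \<Rightarrow> ('n, 'k) vec) \<Rightarrow> bool" where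
  "enl_bialgebra B D E \<longleftrightarrow> lie_bialgebra B D \<and> is_enl B E \<and> is_enl (dual_br D) (dual_map E)"

end

theory Submission
  imports Defs "HOL-Library.Function_Algebras"
begin

(* Everything is computed through the pairing of g^* with g.  Let P = r^#, Q = (r^21)^# and
   S = P + Q be the maps g^* -> g defined by r, r^21 and r + r^21.  The bracket dual to Delta_r is
     [alpha, beta] = ad^*_(P alpha) beta + ad^*_(Q beta) alpha.
   Invariance of r + r^21 makes (alpha, beta) |-> ad^*_(S alpha) beta skew, which gives the
   antisymmetry of Delta_r and of the dual bracket, and makes S equivariant.  The classical
   Yang-Baxter equation says that P is a homomorphism from the dual bracket to the bracket of g.
   With these facts the Jacobiator of the dual bracket reduces to the cyclic sum of
   ad^*_[S alpha, S beta] gamma, which vanishes in characteristic 0.  The cocycle identity holds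
   because ad_x (x) 1 + 1 (x) ad_x is a representation of g on g (x) g.  Finally
   Delta_r o E = (E (x) 1) o Delta_r follows from (1 (x) E) r = (E (x) 1) r and
   ad_(E x) = E ad_x = ad_x E, and its dual says that E^* is an equivariant Nijenhuis operator
   for the dual bracket. *)

lemma vadd_eq_plus [simp]: "vadd x y = x + y"
  by (simp add: vadd_def plus_fun_def)

lemma tadd_eq_plus [simp]: "tadd s t = s + t"
  by (simp add: tadd_def fun_eq_iff)

lemma tsub_eq_minus [simp]: "tsub s t = s - t"
  by (simp add: tsub_def fun_eq_iff)

lemma smul_apply [simp]: "smul a x i = a * x i"
  by (simp add: smul_def)

lemma lin_add: "lin f \<Longrightarrow> f (x + y) = f x + f y"
  by (simp add: lin_def)

lemma lin_smul: "lin f \<Longrightarrow> f (smul a x) = smul a (f x)"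
  by (simp add: lin_def)

lemma lin_zero: "lin f \<Longrightarrow> f 0 = 0"
  using lin_add[of f 0 0] by simp

lemma lin_minus: "lin f \<Longrightarrow> f (- x) = - f x"
  using lin_add[of f "- x" x] lin_zero[of f] by (simp add: eq_neg_iff_add_eq_0)

lemma lin_diff: "lin f \<Longrightarrow> f (x - y) = f x - f y"
  using lin_add[of f x "- y"] lin_minus[of f y] by simp

lemma lin_id: "lin id"
  by (simp add: lin_def)

lemma additive_functional_lincomb:
  fixes \<phi> :: "('n, 'k::field) vec \<Rightarrow> 'k"
  assumes add: "\<And>x y. \<phi> (x + y) = \<phi> x + \<phi> y"
    and scale: "\<And>a x. \<phi> (smul a x) = a * \<phi> x"
    and "finite A"
  shows "\<phi> (\<lambda>i. \<Sum>p\<in>A. c p * u p i) = (\<Sum>p\<in>A. c p * \<phi> (u p))"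
  using \<open>finite A\<close>
proof (induction A rule: finite_induct)
  case empty
  have "\<phi> 0 = 0"
    using add[of 0 0] by (metis add_0 add_cancel_right_right)
  then show ?case
    by (simp add: zero_fun_def)
next
  case (insert p A)
  have "(\<lambda>i. \<Sum>q\<in>insert p A. c q * u q i) = smul (c p) (u p) + (\<lambda>i. \<Sum>q\<in>A. c q * u q i)"
    using insert.hyps by (simp add: smul_def fun_eq_iff)
  then show ?case
    using insert by (simp add: add scale)
qed

lemma lincomb_unitv: "(\<lambda>i. \<Sum>k\<in>UNIV. x k * unitv k i) = (x :: ('n::finite, 'k::field) vec)"
  by (simp add: unitv_def fun_eq_iff if_distrib [where f = "\<lambda>x. _ * x"] sum.delta' cong: if_cong)

lemma additive_functional_expand:
  fixes \<phi> :: "('n::finite, 'k::field) vec \<Rightarrow> 'k"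
  assumes "\<And>x y. \<phi> (x + y) = \<phi> x + \<phi> y" and "\<And>a x. \<phi> (smul a x) = a * \<phi> x"
  shows "\<phi> x = (\<Sum>k\<in>UNIV. x k * \<phi> (unitv k))"
  using additive_functional_lincomb[OF assms, of UNIV x unitv] by (simp add: lincomb_unitv)

definition pair :: "('n::finite, 'k::field) vec \<Rightarrow> ('n, 'k) vec \<Rightarrow> 'k" where
  "pair \<mu> x = (\<Sum>i\<in>UNIV. \<mu> i * x i)"

lemma pair_add_right [simp]: "pair \<mu> (x + y) = pair \<mu> x + pair \<mu> y"
  by (simp add: pair_def distrib_left sum.distrib)

lemma pair_add_left [simp]: "pair (\<mu> + \<nu>) x = pair \<mu> x + pair \<nu> x"
  by (simp add: pair_def distrib_right sum.distrib)

lemma pair_minus_right [simp]: "pair \<mu> (- x) = - pair \<mu> x"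
  by (simp add: pair_def sum_negf)

lemma pair_minus_left [simp]: "pair (- \<mu>) x = - pair \<mu> x"
  by (simp add: pair_def sum_negf)

lemma pair_diff_right [simp]: "pair \<mu> (x - y) = pair \<mu> x - pair \<mu> y"
  by (simp add: pair_def right_diff_distrib sum_subtractf)

lemma pair_diff_left [simp]: "pair (\<mu> - \<nu>) x = pair \<mu> x - pair \<nu> x"
  by (simp add: pair_def left_diff_distrib sum_subtractf)

lemma pair_smul_right [simp]: "pair \<mu> (smul a x) = a * pair \<mu> x"
  by (simp add: pair_def smul_def sum_distrib_left mult_ac)

lemma pair_unitv_right [simp]: "pair \<mu> (unitv k) = \<mu> k"
  by (simp add: pair_def unitv_def if_distrib [where f = "\<lambda>x. _ * x"] cong: if_cong)

lemma pair_unitv_left [simp]: "pair (unitv k) x = x k"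
  by (simp add: pair_def unitv_def if_distrib [where f = "\<lambda>y. y * _"] cong: if_cong)

lemma vec_eqI: "(\<And>\<mu>. pair \<mu> x = pair \<mu> y) \<Longrightarrow> x = y"
  by (metis ext pair_unitv_left)

lemma covec_eqI: "(\<And>x. pair \<mu> x = pair \<nu> x) \<Longrightarrow> \<mu> = \<nu>"
  by (metis ext pair_unitv_right)

lemma dual_map_apply: "dual_map f \<mu> k = pair \<mu> (f (unitv k))"
  by (simp add: dual_map_def pair_def)

lemma pair_dual_map:
  assumes "lin f"
  shows "pair (dual_map f \<mu>) x = pair \<mu> (f x)"
proof -
  have "pair \<mu> (f x) = (\<Sum>k\<in>UNIV. x k * pair \<mu> (f (unitv k)))"
    by (rule additive_functional_expand[where \<phi> = "\<lambda>z. pair \<mu> (f z)"])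
      (simp_all add: lin_add[OF assms] lin_smul[OF assms])
  then show ?thesis
    by (simp add: pair_def dual_map_def mult.commute)
qed

lemma lin_dual_map: "lin (dual_map f)"
  by (simp add: lin_def dual_map_def smul_def fun_eq_iff algebra_simps sum.distrib sum_distrib_left)

lemma dual_map_id [simp]: "dual_map id \<mu> = \<mu>"
  by (simp add: dual_map_apply fun_eq_iff)

lemma dual_map_comp: "lin f \<Longrightarrow> dual_map (f \<circ> g) \<mu> = dual_map g (dual_map f \<mu>)"
  by (simp add: dual_map_apply pair_dual_map fun_eq_iff)

lemma sum_swap_pairs:
  "(\<Sum>i\<in>A. \<Sum>j\<in>B. \<Sum>a\<in>C. \<Sum>b\<in>D. f i j a b) = (\<Sum>a\<in>C. \<Sum>b\<in>D. \<Sum>i\<in>A. \<Sum>j\<in>B. f i j a b)"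
  by (simp add: sum.swap[of _ B C] sum.swap[of _ B D] sum.swap[of _ A C] sum.swap[of _ A D])

lemma sum_rotate3:
  "(\<Sum>i\<in>A. \<Sum>j\<in>B. \<Sum>k\<in>C. f i j k) = (\<Sum>j\<in>B. \<Sum>k\<in>C. \<Sum>i\<in>A. f i j k)"
  by (simp add: sum.swap[of _ A B] sum.swap[of _ A C])

definition tpair :: "('n::finite, 'k::field) vec \<Rightarrow> ('n, 'k) vec \<Rightarrow> ('n, 'k) ten2 \<Rightarrow> 'k" where
  "tpair \<alpha> \<beta> t = (\<Sum>i\<in>UNIV. \<Sum>j\<in>UNIV. \<alpha> i * \<beta> j * t i j)"

lemma tpair_eq_pair: "tpair \<alpha> \<beta> t = pair \<alpha> (\<lambda>i. pair \<beta> (t i))"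
  by (simp add: tpair_def pair_def sum_distrib_left mult_ac)

lemma tensor_eqI: "(\<And>\<alpha> \<beta>. tpair \<alpha> \<beta> s = tpair \<alpha> \<beta> t) \<Longrightarrow> s = t"
  by (metis ext tpair_eq_pair pair_unitv_left)

lemma tpair_add [simp]: "tpair \<alpha> \<beta> (s + t) = tpair \<alpha> \<beta> s + tpair \<alpha> \<beta> t"
  by (simp add: tpair_def distrib_left sum.distrib)

lemma tpair_minus [simp]: "tpair \<alpha> \<beta> (- t) = - tpair \<alpha> \<beta> t"
  by (simp add: tpair_def sum_negf)

lemma tpair_scale [simp]: "tpair \<alpha> \<beta> (\<lambda>i j. a * t i j) = a * tpair \<alpha> \<beta> t"
  by (simp add: tpair_def sum_distrib_left mult_ac)

lemma tpair_add_left [simp]: "tpair (\<alpha> + \<alpha>') \<beta> t = tpair \<alpha> \<beta> t + tpair \<alpha>' \<beta> t"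
  by (simp add: tpair_def algebra_simps sum.distrib)

lemma tpair_add_right [simp]: "tpair \<alpha> (\<beta> + \<beta>') t = tpair \<alpha> \<beta> t + tpair \<alpha> \<beta>' t"
  by (simp add: tpair_def algebra_simps sum.distrib)

lemma tpair_smul_left [simp]: "tpair (smul a \<alpha>) \<beta> t = a * tpair \<alpha> \<beta> t"
  by (simp add: tpair_def smul_def sum_distrib_left mult_ac)

lemma tpair_smul_right [simp]: "tpair \<alpha> (smul a \<beta>) t = a * tpair \<alpha> \<beta> t"
  by (simp add: tpair_def smul_def sum_distrib_left mult_ac)

lemma tpair_flip: "tpair \<alpha> \<beta> (flip t) = tpair \<beta> \<alpha> t"
  unfolding tpair_def flip_def by (subst sum.swap) (simp add: mult_ac)

lemma tpair_tmap: "tpair \<alpha> \<beta> (tmap A C t) = tpair (dual_map A \<alpha>) (dual_map C \<beta>) t"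
proof -
  have "tpair \<alpha> \<beta> (tmap A C t) = (\<Sum>i\<in>UNIV. \<Sum>j\<in>UNIV. \<Sum>a\<in>UNIV. \<Sum>b\<in>UNIV.
          (\<alpha> i * A (unitv a) i) * (\<beta> j * C (unitv b) j) * t a b)"
    by (simp add: tpair_def tmap_def sum_distrib_left mult_ac)
  also have "\<dots> = (\<Sum>a\<in>UNIV. \<Sum>b\<in>UNIV. \<Sum>i\<in>UNIV. \<Sum>j\<in>UNIV.
          (\<alpha> i * A (unitv a) i) * (\<beta> j * C (unitv b) j) * t a b)"
    by (rule sum_swap_pairs)
  also have "\<dots> = (\<Sum>a\<in>UNIV. \<Sum>b\<in>UNIV.
          (\<Sum>i\<in>UNIV. \<alpha> i * A (unitv a) i) * (\<Sum>j\<in>UNIV. \<beta> j * C (unitv b) j) * t a b)"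
    by (simp only: sum_product) (simp add: sum_distrib_right)
  also have "\<dots> = tpair (dual_map A \<alpha>) (dual_map C \<beta>) t"
    by (simp add: tpair_def dual_map_def)
  finally show ?thesis .
qed

definition sharp :: "('n::finite, 'k::field) ten2 \<Rightarrow> ('n, 'k) vec \<Rightarrow> ('n, 'k) vec" where
  "sharp t \<alpha> = (\<lambda>j. \<Sum>i\<in>UNIV. \<alpha> i * t i j)"

lemma pair_sharp: "pair \<beta> (sharp t \<alpha>) = tpair \<alpha> \<beta> t"
  unfolding pair_def sharp_def tpair_def by (subst sum.swap) (simp add: sum_distrib_left mult_ac)

lemma pair_sharp_flip: "pair \<alpha> (sharp (flip t) \<beta>) = tpair \<alpha> \<beta> t"
  by (simp add: pair_sharp tpair_flip)

lemma sharp_add_tensor: "sharp (s + t) \<alpha> = sharp s \<alpha> + sharp t \<alpha>"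
  by (simp add: sharp_def fun_eq_iff distrib_left sum.distrib)

lemma flip_add: "flip (s + t) = flip s + flip t"
  by (simp add: flip_def fun_eq_iff)

lemma flip_flip [simp]: "flip (flip t) = t"
  by (simp add: flip_def)

lemma tmap_add: "tmap A C (s + t) = tmap A C s + tmap A C t"
  by (simp add: tmap_def fun_eq_iff algebra_simps sum.distrib)

lemma tmap_diff_left: "tmap (A - A') C t = tmap A C t - tmap A' C t"
  by (simp add: tmap_def fun_eq_iff algebra_simps sum_subtractf)

lemma tmap_diff_right: "tmap A (C - C') t = tmap A C t - tmap A C' t"
  by (simp add: tmap_def fun_eq_iff algebra_simps sum_subtractf)

lemma tmap_comp: "lin A \<Longrightarrow> lin C \<Longrightarrow> tmap A C (tmap A' C' t) = tmap (A \<circ> A') (C \<circ> C') t"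
  by (rule tensor_eqI) (simp add: tpair_tmap dual_map_comp)

lemma flip_tmap: "flip (tmap A C t) = tmap C A (flip t)"
  by (rule tensor_eqI) (simp add: tpair_flip tpair_tmap)

lemma dual_br_apply: "dual_br D \<alpha> \<beta> k = tpair \<alpha> \<beta> (D (unitv k))"
  by (simp add: dual_br_def tpair_def)

lemma lin2_dual_br: "lin2 (dual_br D)"
  by (simp add: lin2_def lin_def fun_eq_iff dual_br_apply smul_apply)

lemma pair_dual_br:
  assumes "lin_ten D"
  shows "pair (dual_br D \<alpha> \<beta>) x = tpair \<alpha> \<beta> (D x)"
proof -
  have "tpair \<alpha> \<beta> (D x) = (\<Sum>k\<in>UNIV. x k * tpair \<alpha> \<beta> (D (unitv k)))"
    by (rule additive_functional_expand[where \<phi> = "\<lambda>z. tpair \<alpha> \<beta> (D z)"])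
      (use assms in \<open>simp_all add: lin_ten_def\<close>)
  then show ?thesis
    by (simp add: pair_def dual_br_apply mult.commute)
qed

lemma dual_br_swap:
  assumes "\<And>x. flip (D x) = - D x"
  shows "dual_br D \<beta> \<alpha> = - dual_br D \<alpha> \<beta>"
proof
  fix k
  have "tpair \<beta> \<alpha> (D (unitv k)) = tpair \<alpha> \<beta> (flip (D (unitv k)))"
    by (simp add: tpair_flip)
  then show "dual_br D \<beta> \<alpha> k = (- dual_br D \<alpha> \<beta>) k"
    by (simp add: dual_br_apply assms)
qed

section \<open>Lie algebras, the coadjoint action and coboundary cobrackets\<close>

locale lie_algebra =
  fixes B :: "('n::finite, 'k::field) vec \<Rightarrow> ('n, 'k) vec \<Rightarrow> ('n, 'k) vec"
  assumes is_lie: "is_lie B"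
begin

lemma lin_bracket_right: "lin (B x)"
  using is_lie by (simp add: is_lie_def lin2_def)

lemma lin_bracket_left: "lin (\<lambda>x. B x y)"
  using is_lie by (simp add: is_lie_def lin2_def)

lemma bracket_add_left [simp]: "B (x + y) z = B x z + B y z"
  using lin_add[OF lin_bracket_left] .

lemma bracket_add_right [simp]: "B x (y + z) = B x y + B x z"
  using lin_add[OF lin_bracket_right] .

lemma bracket_minus_right [simp]: "B x (- y) = - B x y"
  using lin_minus[OF lin_bracket_right] .

lemma bracket_diff_left [simp]: "B (x - y) z = B x z - B y z"
  using lin_diff[OF lin_bracket_left] .

lemma bracket_smul_left [simp]: "B (smul a x) z = smul a (B x z)"
  using lin_smul[OF lin_bracket_left] .

lemma bracket_smul_right [simp]: "B x (smul a y) = smul a (B x y)"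
  using lin_smul[OF lin_bracket_right] .

lemma bracket_self [simp]: "B x x = 0"
  using is_lie by (simp add: is_lie_def zero_fun_def)

lemma bracket_antisym: "B y x = - B x y"
proof -
  have "B (x + y) (x + y) = B x x + B y x + (B x y + B y y)"
    by (simp only: bracket_add_left bracket_add_right)
  then have "B y x + B x y = 0"
    by simp
  then show ?thesis
    by (simp add: eq_neg_iff_add_eq_0)
qed

lemma bracket_jacobi: "B x (B y z) + B y (B z x) + B z (B x y) = 0"
  using is_lie by (simp add: is_lie_def zero_fun_def add.assoc)

lemma bracket_leibniz: "B (B x y) z = B x (B y z) - B y (B x z)"
proof -
  have "B (B x y) z = - B z (B x y)"
    by (rule bracket_antisym)
  also have "\<dots> = B x (B y z) + B y (B z x)"
    using bracket_jacobi[of x y z] by (simp add: neg_eq_iff_add_eq_0 add_ac)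
  also have "\<dots> = B x (B y z) - B y (B x z)"
    using bracket_antisym[of z x] by simp
  finally show ?thesis .
qed

lemma ad_bracket: "B (B x y) = (B x \<circ> B y) - (B y \<circ> B x)"
  by (simp add: fun_eq_iff bracket_leibniz)

definition coad :: "('n, 'k) vec \<Rightarrow> ('n, 'k) vec \<Rightarrow> ('n, 'k) vec" where
  "coad x \<mu> = - dual_map (B x) \<mu>"

lemma pair_coad: "pair (coad x \<mu>) y = - pair \<mu> (B x y)"
  by (simp add: coad_def pair_dual_map lin_bracket_right)

lemma coad_add_left [simp]: "coad (x + y) \<mu> = coad x \<mu> + coad y \<mu>"
  by (rule covec_eqI) (simp add: pair_coad)

lemma coad_add_right [simp]: "coad x (\<mu> + \<nu>) = coad x \<mu> + coad x \<nu>"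
  by (rule covec_eqI) (simp add: pair_coad)

lemma coad_minus_right [simp]: "coad x (- \<mu>) = - coad x \<mu>"
  by (rule covec_eqI) (simp add: pair_coad)

lemma coad_diff_left [simp]: "coad (x - y) \<mu> = coad x \<mu> - coad y \<mu>"
  by (rule covec_eqI) (simp add: pair_coad)

lemma coad_bracket: "coad (B x y) \<mu> = coad x (coad y \<mu>) - coad y (coad x \<mu>)"
  by (rule covec_eqI) (simp add: pair_coad bracket_leibniz)

lemma adact_eq: "adact B x t = tmap (B x) id t + tmap id (B x) t"
  by (simp add: adact_def)

lemma adact_add: "adact B x (s + t) = adact B x s + adact B x t"
  by (simp add: adact_eq tmap_add)

lemma flip_adact: "flip (adact B x t) = adact B x (flip t)"
  by (simp add: adact_eq flip_add flip_tmap add.commute)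

lemma adact_bracket: "adact B (B x y) t = adact B x (adact B y t) - adact B y (adact B x t)"
  unfolding adact_eq ad_bracket tmap_diff_left tmap_diff_right
  by (simp add: tmap_add tmap_comp lin_bracket_right lin_id)

lemma tpair_adact:
  "tpair \<alpha> \<beta> (adact B x t) = tpair (dual_map (B x) \<alpha>) \<beta> t + tpair \<alpha> (dual_map (B x) \<beta>) t"
  by (simp add: adact_eq tpair_tmap)

lemma tpair_cobr:
  "tpair \<alpha> \<beta> (cobr B r x) = pair \<alpha> (B x (sharp (flip r) \<beta>)) + pair \<beta> (B x (sharp r \<alpha>))"
proof -
  have "tpair (dual_map (B x) \<alpha>) \<beta> r = pair \<alpha> (B x (sharp (flip r) \<beta>))"
    by (simp add: pair_sharp_flip[symmetric] pair_dual_map lin_bracket_right)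
  moreover have "tpair \<alpha> (dual_map (B x) \<beta>) r = pair \<beta> (B x (sharp r \<alpha>))"
    by (simp add: pair_sharp[symmetric] pair_dual_map lin_bracket_right)
  ultimately show ?thesis
    by (simp add: cobr_def tpair_adact)
qed

lemma lin_ten_cobr: "lin_ten (cobr B r)"
  unfolding lin_ten_def
  by (auto intro!: tensor_eqI simp: tpair_cobr distrib_left)

lemma cobr_cocycle: "cobr B r (B x y) = adact B x (cobr B r y) - adact B y (cobr B r x)"
  by (simp add: cobr_def adact_bracket)

lemma dual_br_cobr: "dual_br (cobr B r) \<alpha> \<beta> = coad (sharp r \<alpha>) \<beta> + coad (sharp (flip r) \<beta>) \<alpha>"
proof (rule covec_eqI)
  fix x
  show "pair (dual_br (cobr B r) \<alpha> \<beta>) x = pair (coad (sharp r \<alpha>) \<beta> + coad (sharp (flip r) \<beta>) \<alpha>) x"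
    by (simp add: pair_dual_br lin_ten_cobr tpair_cobr pair_coad
        bracket_antisym[of x "sharp r \<alpha>"] bracket_antisym[of x "sharp (flip r) \<beta>"])
qed

end

section \<open>The classical Yang-Baxter equation\<close>

context lie_algebra
begin

lemma bracket_lincomb:
  fixes u v :: "'i::finite \<Rightarrow> ('n, 'k) vec"
  shows "B (\<lambda>i. \<Sum>p\<in>UNIV. a p * u p i) (\<lambda>i. \<Sum>q\<in>UNIV. b q * v q i) s
     = (\<Sum>p\<in>UNIV. \<Sum>q\<in>UNIV. a p * b q * B (u p) (v q) s)"
proof -
  have left: "B (\<lambda>i. \<Sum>p\<in>UNIV. a p * u p i) w s = (\<Sum>p\<in>UNIV. a p * B (u p) w s)" for w
    by (rule additive_functional_lincomb[where \<phi> = "\<lambda>z. B z w s"]) simp_all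
  have right: "B (u p) (\<lambda>i. \<Sum>q\<in>UNIV. b q * v q i) s = (\<Sum>q\<in>UNIV. b q * B (u p) (v q) s)" for p
    by (rule additive_functional_lincomb[where \<phi> = "\<lambda>z. B (u p) z s"]) simp_all
  show ?thesis
    by (simp add: left right sum_distrib_left mult_ac)
qed

lemma cybe_eq:
  "cybe B r = (\<lambda>p q s. B (flip r q) (flip r s) p + B (r p) (r q) s + B (r p) (flip r s) q)"
proof -
  have expand: "B x y s = (\<Sum>a\<in>UNIV. \<Sum>b\<in>UNIV. x a * y b * B (unitv a) (unitv b) s)" for x y s
    using bracket_lincomb[of x unitv y unitv s] by (simp add: lincomb_unitv)
  show ?thesis
    by (simp only: cybe_def expand[symmetric]) (simp add: flip_def)
qed

lemma cybe_pairing: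
  assumes "cybe B r = 0"
  shows "pair \<alpha> (B (sharp (flip r) \<beta>) (sharp (flip r) \<gamma>)) + pair \<beta> (B (sharp r \<alpha>) (sharp (flip r) \<gamma>))
    + pair \<gamma> (B (sharp r \<alpha>) (sharp r \<beta>)) = 0"
proof -
  have "0 = (\<Sum>p\<in>UNIV. \<Sum>q\<in>UNIV. \<Sum>s\<in>UNIV. \<alpha> p * \<beta> q * \<gamma> s * cybe B r p q s)"
    using assms by simp
  also have "\<dots> = (\<Sum>p\<in>UNIV. \<Sum>q\<in>UNIV. \<Sum>s\<in>UNIV. \<alpha> p * \<beta> q * \<gamma> s * B (flip r q) (flip r s) p)
      + (\<Sum>p\<in>UNIV. \<Sum>q\<in>UNIV. \<Sum>s\<in>UNIV. \<alpha> p * \<beta> q * \<gamma> s * B (r p) (flip r s) q)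
      + (\<Sum>p\<in>UNIV. \<Sum>q\<in>UNIV. \<Sum>s\<in>UNIV. \<alpha> p * \<beta> q * \<gamma> s * B (r p) (r q) s)"
    by (simp add: cybe_eq distrib_left sum.distrib)
  also have "(\<Sum>p\<in>UNIV. \<Sum>q\<in>UNIV. \<Sum>s\<in>UNIV. \<alpha> p * \<beta> q * \<gamma> s * B (flip r q) (flip r s) p)
      = pair \<alpha> (B (sharp (flip r) \<beta>) (sharp (flip r) \<gamma>))"
    by (simp add: pair_def sharp_def bracket_lincomb sum_distrib_left mult_ac)
  also have "(\<Sum>p\<in>UNIV. \<Sum>q\<in>UNIV. \<Sum>s\<in>UNIV. \<alpha> p * \<beta> q * \<gamma> s * B (r p) (flip r s) q)
      = pair \<beta> (B (sharp r \<alpha>) (sharp (flip r) \<gamma>))"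
    by (subst sum.swap) (simp add: pair_def sharp_def bracket_lincomb sum_distrib_left mult_ac)
  also have "(\<Sum>p\<in>UNIV. \<Sum>q\<in>UNIV. \<Sum>s\<in>UNIV. \<alpha> p * \<beta> q * \<gamma> s * B (r p) (r q) s)
      = pair \<gamma> (B (sharp r \<alpha>) (sharp r \<beta>))"
    by (subst sum_rotate3[symmetric]) (simp add: pair_def sharp_def bracket_lincomb sum_distrib_left mult_ac)
  finally show ?thesis
    by simp
qed

lemma sharp_dual_br_cobr:
  assumes "cybe B r = 0"
  shows "sharp r (dual_br (cobr B r) \<alpha> \<beta>) = B (sharp r \<alpha>) (sharp r \<beta>)"
proof (rule vec_eqI)
  fix \<gamma>
  have "pair \<gamma> (sharp r (dual_br (cobr B r) \<alpha> \<beta>)) = pair (dual_br (cobr B r) \<alpha> \<beta>) (sharp (flip r) \<gamma>)"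
    by (simp add: pair_sharp tpair_flip)
  also have "\<dots> = - pair \<beta> (B (sharp r \<alpha>) (sharp (flip r) \<gamma>))
      - pair \<alpha> (B (sharp (flip r) \<beta>) (sharp (flip r) \<gamma>))"
    by (simp add: dual_br_cobr pair_coad)
  also have "\<dots> = pair \<gamma> (B (sharp r \<alpha>) (sharp r \<beta>))"
    using cybe_pairing[OF assms, of \<alpha> \<beta> \<gamma>] by algebra
  finally show "pair \<gamma> (sharp r (dual_br (cobr B r) \<alpha> \<beta>)) = pair \<gamma> (B (sharp r \<alpha>) (sharp r \<beta>))" .
qed

end

section \<open>Ad-invariant symmetric part: the dual Jacobi identity\<close>

locale invariant_symmetric_part = lie_algebra B
  for B :: "('n::finite, 'k::field_char_0) vec \<Rightarrow> ('n, 'k) vec \<Rightarrow> ('n, 'k) vec" +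
  fixes r :: "('n, 'k) ten2"
  assumes adact_symmetric_part: "adact B x (r + flip r) = 0"
begin

abbreviation P where "P \<equiv> sharp r"
abbreviation Q where "Q \<equiv> sharp (flip r)"
abbreviation S where "S \<equiv> sharp (r + flip r)"
abbreviation dual_bracket where "dual_bracket \<equiv> dual_br (cobr B r)"

lemma S_eq: "S \<alpha> = P \<alpha> + Q \<alpha>"
  by (rule sharp_add_tensor)

lemma cobr_flip: "flip (cobr B r x) = - cobr B r x"
proof -
  have "adact B x r + adact B x (flip r) = 0"
    using adact_symmetric_part[of x] by (simp add: adact_add)
  then show ?thesis
    by (simp add: cobr_def flip_adact eq_neg_iff_add_eq_0 add.commute)
qed

lemma dual_bracket_antisym: "dual_bracket \<beta> \<alpha> = - dual_bracket \<alpha> \<beta>"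
  by (rule dual_br_swap) (rule cobr_flip)

lemma dual_bracket_self: "dual_bracket \<alpha> \<alpha> = 0"
proof
  fix k
  have "dual_bracket \<alpha> \<alpha> k + dual_bracket \<alpha> \<alpha> k = 0"
    using dual_bracket_antisym[of \<alpha> \<alpha>] by (simp add: fun_eq_iff eq_neg_iff_add_eq_0)
  then show "dual_bracket \<alpha> \<alpha> k = 0 k"
    by (simp add: mult_2[symmetric])
qed

lemma coad_S_skew: "coad (S \<alpha>) \<beta> = - coad (S \<beta>) \<alpha>"
proof -
  have "coad (S \<alpha>) \<beta> + coad (S \<beta>) \<alpha> = dual_bracket \<alpha> \<beta> + dual_bracket \<beta> \<alpha>"
    by (simp add: S_eq dual_br_cobr algebra_simps)
  also have "\<dots> = 0"
    by (simp add: dual_bracket_antisym[of \<alpha> \<beta>])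
  finally show ?thesis
    by (simp add: eq_neg_iff_add_eq_0)
qed

lemma pair_S_commute: "pair \<nu> (S \<mu>) = pair \<mu> (S \<nu>)"
proof -
  have "flip (r + flip r) = r + flip r"
    by (simp add: flip_add add.commute)
  then show ?thesis
    by (metis pair_sharp tpair_flip)
qed

lemma S_coad: "S (coad x \<mu>) = B x (S \<mu>)"
proof (rule vec_eqI)
  fix \<nu>
  have "pair \<nu> (S (coad x \<mu>)) = - pair \<mu> (B x (S \<nu>))"
    by (simp add: pair_S_commute[of \<nu>] pair_coad)
  also have "\<dots> = - pair (coad (S \<nu>) \<mu>) x"
    by (simp add: pair_coad bracket_antisym[of x])
  also have "\<dots> = pair (coad (S \<mu>) \<nu>) x"
    by (simp add: coad_S_skew[of \<nu>])
  also have "\<dots> = pair \<nu> (B x (S \<mu>))"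
    by (simp add: pair_coad bracket_antisym[of x])
  finally show "pair \<nu> (S (coad x \<mu>)) = pair \<nu> (B x (S \<mu>))" .
qed

lemma coad_S_bracket_cyclic:
  "coad (B (S \<alpha>) (S \<beta>)) \<gamma> + coad (B (S \<beta>) (S \<gamma>)) \<alpha> + coad (B (S \<gamma>) (S \<alpha>)) \<beta> = 0"
  (is "?T = 0")
proof -
  txt \<open>Via the equivariance of S the cyclic sum is \<open>-U\<close>, via the representation property
    it is \<open>2U\<close>; hence \<open>3U = 0\<close>.\<close>
  define U where "U = coad (S \<alpha>) (coad (S \<beta>) \<gamma>) + coad (S \<beta>) (coad (S \<gamma>) \<alpha>)
    + coad (S \<gamma>) (coad (S \<alpha>) \<beta>)"
  have by_equivariance: "coad (B (S \<alpha>) (S \<beta>)) \<gamma> = - coad (S \<gamma>) (coad (S \<alpha>) \<beta>)" for \<alpha> \<beta> \<gamma>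
    using S_coad[of "S \<alpha>" \<beta>] coad_S_skew[of "coad (S \<alpha>) \<beta>" \<gamma>] by simp
  have by_representation:
    "coad (B (S \<alpha>) (S \<beta>)) \<gamma> = coad (S \<alpha>) (coad (S \<beta>) \<gamma>) + coad (S \<beta>) (coad (S \<gamma>) \<alpha>)" for \<alpha> \<beta> \<gamma>
    by (simp add: coad_bracket coad_S_skew[of \<alpha> \<gamma>])
  have minus: "?T = - U"
    unfolding U_def by (simp add: by_equivariance algebra_simps)
  have double: "?T = U + U"
    unfolding U_def by (simp add: by_representation algebra_simps)
  have "U + U + U = 0"
    using minus double by (metis add.left_inverse)
  then have "U = 0"
    by (simp add: fun_eq_iff)
  with minus show ?thesis
    by simp
qed

lemma dual_bracket_jacobi:
  assumes cybe: "cybe B r = 0"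
  shows "dual_bracket (dual_bracket \<alpha> \<beta>) \<gamma> + dual_bracket (dual_bracket \<beta> \<gamma>) \<alpha>
    + dual_bracket (dual_bracket \<gamma> \<alpha>) \<beta> = 0"
proof -
  txt \<open>Group the nine terms of the Jacobiator by their innermost argument.\<close>
  let ?K = "\<lambda>\<alpha> \<beta> \<gamma>. coad (B (P \<alpha>) (P \<beta>)) \<gamma> + coad (Q \<alpha>) (coad (P \<beta>) \<gamma>) + coad (Q \<beta>) (coad (Q \<alpha>) \<gamma>)"
  have expand: "dual_bracket (dual_bracket \<alpha> \<beta>) \<gamma>
      = coad (B (P \<alpha>) (P \<beta>)) \<gamma> + coad (Q \<gamma>) (coad (P \<alpha>) \<beta>) + coad (Q \<gamma>) (coad (Q \<beta>) \<alpha>)" for \<alpha> \<beta> \<gamma>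
    unfolding dual_br_cobr[of r "dual_bracket \<alpha> \<beta>" \<gamma>] sharp_dual_br_cobr[OF cybe]
    by (simp add: dual_br_cobr add.assoc)
  have K: "?K \<alpha> \<beta> \<gamma> = coad (B (S \<alpha>) (P \<beta>)) \<gamma> - coad (B (Q \<alpha>) (S \<gamma>)) \<beta>" for \<alpha> \<beta> \<gamma>
  proof -
    have "coad (B (Q \<alpha>) (S \<gamma>)) \<beta> = - coad (S \<beta>) (coad (Q \<alpha>) \<gamma>)"
      using S_coad[of "Q \<alpha>" \<gamma>] coad_S_skew[of "coad (Q \<alpha>) \<gamma>" \<beta>] by simp
    then show ?thesis
      by (simp add: S_eq coad_bracket algebra_simps)
  qed
  have T: "coad (B (S \<alpha>) (S \<beta>)) \<gamma> = coad (B (S \<alpha>) (P \<beta>)) \<gamma> - coad (B (Q \<beta>) (S \<alpha>)) \<gamma>" for \<alpha> \<beta> \<gamma>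
    using bracket_antisym[of "S \<alpha>" "Q \<beta>"] by (simp add: S_eq[of \<beta>])
  have "dual_bracket (dual_bracket \<alpha> \<beta>) \<gamma> + dual_bracket (dual_bracket \<beta> \<gamma>) \<alpha>
      + dual_bracket (dual_bracket \<gamma> \<alpha>) \<beta> = ?K \<alpha> \<beta> \<gamma> + ?K \<beta> \<gamma> \<alpha> + ?K \<gamma> \<alpha> \<beta>"
    by (simp only: expand) (simp add: algebra_simps)
  also have "\<dots> = coad (B (S \<alpha>) (S \<beta>)) \<gamma> + coad (B (S \<beta>) (S \<gamma>)) \<alpha> + coad (B (S \<gamma>) (S \<alpha>)) \<beta>"
    by (simp only: K T) (simp add: algebra_simps)
  also have "\<dots> = 0"
    by (rule coad_S_bracket_cyclic)
  finally show ?thesis .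
qed

lemma is_lie_dual_bracket:
  assumes "cybe B r = 0"
  shows "is_lie dual_bracket"
proof -
  have "dual_bracket \<alpha> (dual_bracket \<beta> \<gamma>)
        + (dual_bracket \<beta> (dual_bracket \<gamma> \<alpha>) + dual_bracket \<gamma> (dual_bracket \<alpha> \<beta>))
      = - (dual_bracket (dual_bracket \<alpha> \<beta>) \<gamma> + dual_bracket (dual_bracket \<beta> \<gamma>) \<alpha>
        + dual_bracket (dual_bracket \<gamma> \<alpha>) \<beta>)" for \<alpha> \<beta> \<gamma>
    by (simp only: dual_bracket_antisym[of \<alpha> "dual_bracket \<beta> \<gamma>"]
        dual_bracket_antisym[of \<beta> "dual_bracket \<gamma> \<alpha>"] dual_bracket_antisym[of \<gamma> "dual_bracket \<alpha> \<beta>"])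
      (simp add: algebra_simps)
  then show ?thesis
    unfolding is_lie_def
    by (simp add: lin2_dual_br dual_bracket_self dual_bracket_jacobi[OF assms] zero_fun_def[symmetric])
qed

lemma lie_bialgebra_cobr:
  assumes "cybe B r = 0"
  shows "lie_bialgebra B (cobr B r)"
  unfolding lie_bialgebra_def
  using is_lie lin_ten_cobr cobr_flip is_lie_dual_bracket[OF assms] cobr_cocycle
  by (simp add: fun_eq_iff)

end

section \<open>Equivariant Nijenhuis operators\<close>

context lie_algebra
begin

lemma enl_bracket_left:
  assumes "is_enl B E"
  shows "B (E x) y = E (B x y)"
proof -
  have E: "lin E" and enl: "\<And>x y. E (B x y) = B x (E y)"
    using assms by (auto simp: is_enl_def)
  have "B (E x) y = - E (B y x)"
    by (simp add: bracket_antisym[of y "E x"] enl)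
  also have "\<dots> = E (B x y)"
    by (simp add: lin_minus[OF E, symmetric] bracket_antisym[of y x])
  finally show ?thesis .
qed

lemma cobr_enl_intertwine:
  assumes enl: "is_enl B E" and sym: "tmap id E r = tmap E id r"
  shows "cobr B r (E x) = tmap E id (cobr B r x)"
proof -
  have E: "lin E"
    using enl by (simp add: is_enl_def)
  have left: "B (E x) = E \<circ> B x" and right: "B (E x) = B x \<circ> E"
    using enl by (auto simp: fun_eq_iff enl_bracket_left is_enl_def)
  have "tmap id (B x \<circ> E) r = tmap id (B x) (tmap E id r)"
    by (simp add: tmap_comp lin_id lin_bracket_right sym[symmetric])
  also have "\<dots> = tmap E id (tmap id (B x) r)"
    by (simp add: tmap_comp lin_id lin_bracket_right E)
  finally have "tmap id (B (E x)) r = tmap E id (tmap id (B x) r)"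
    by (simp add: right)
  moreover have "tmap (B (E x)) id r = tmap E id (tmap (B x) id r)"
    by (simp add: left tmap_comp E lin_id)
  ultimately show ?thesis
    by (simp add: cobr_def adact_eq tmap_add)
qed

end

lemma is_enl_dual_br:
  assumes D: "lin_ten D" and antisym: "\<And>x. flip (D x) = - D x" and lie: "is_lie (dual_br D)"
    and E: "lin E" and intertwine: "\<And>x. D (E x) = tmap E id (D x)"
  shows "is_enl (dual_br D) (dual_map E)"
proof -
  have left: "dual_map E (dual_br D \<alpha> \<beta>) = dual_br D (dual_map E \<alpha>) \<beta>" for \<alpha> \<beta>
    by (simp add: fun_eq_iff dual_map_apply pair_dual_br[OF D] intertwine tpair_tmap dual_br_apply)
  have swap: "dual_br D \<beta> \<alpha> = - dual_br D \<alpha> \<beta>" for \<alpha> \<beta>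
    using antisym by (rule dual_br_swap)
  have "dual_map E (dual_br D \<alpha> \<beta>) = dual_br D \<alpha> (dual_map E \<beta>)" for \<alpha> \<beta>
  proof -
    have "dual_map E (dual_br D \<alpha> \<beta>) = - dual_map E (dual_br D \<beta> \<alpha>)"
      by (simp add: swap[of \<beta> \<alpha>] lin_minus[OF lin_dual_map])
    also have "\<dots> = dual_br D \<alpha> (dual_map E \<beta>)"
      by (simp add: left swap[of \<alpha> "dual_map E \<beta>"])
    finally show ?thesis .
  qed
  then show ?thesis
    using lie lin_dual_map by (simp add: is_enl_def)
qed

theorem theorem5p6:
  fixes B :: "('n::finite, 'k::field_char_0) vec \<Rightarrow> ('n, 'k) vec \<Rightarrow> ('n, 'k) vec"
    and E :: "('n, 'k) vec \<Rightarrow> ('n, 'k) vec"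
    and r :: "('n, 'k) ten2"
  assumes "alg_closed TYPE('k)"
    and "is_enl B E"
    and "cybe B r = (\<lambda>_ _ _. 0)"
    and "tsub (tmap id E r) (tmap E id r) = (\<lambda>_ _. 0)"
    and "\<forall>x. adact B x (tadd r (flip r)) = (\<lambda>_ _. 0)"
  shows "lie_bialgebra B (cobr B r) \<and> (\<forall>x. cobr B r (E x) = tmap E id (cobr B r x))
         \<and> enl_bialgebra B (cobr B r) E"
proof -
  interpret invariant_symmetric_part B r
    using assms(2,5) by unfold_locales (simp_all add: is_enl_def zero_fun_def)
  have cybe: "cybe B r = 0" and sym: "tmap id E r = tmap E id r"
    using assms(3,4) by (simp_all add: zero_fun_def[symmetric])
  have bialg: "lie_bialgebra B (cobr B r)"
    by (rule lie_bialgebra_cobr[OF cybe])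
  have intertwine: "\<forall>x. cobr B r (E x) = tmap E id (cobr B r x)"
    using cobr_enl_intertwine[OF assms(2) sym] by blast
  have "is_enl dual_bracket (dual_map E)"
    using assms(2) by (intro is_enl_dual_br lin_ten_cobr cobr_flip is_lie_dual_bracket[OF cybe])
      (simp_all add: is_enl_def cobr_enl_intertwine[OF assms(2) sym])
  with bialg intertwine assms(2) show ?thesis
    by (simp add: enl_bialgebra_def)
qed

end
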